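(* Let $N_T,N_R\ge 1$ be integers, let $\mathcal{R}>0$ and $\beta>0$, and let $\bar\gamma_k>0$. Define $\xi=[2\pi(2^{2\mathcal{R}}-1)]^{-1/2}$, $\tau=2^{\mathcal{R}}-1$, $\varphi_H=\tau+\frac{1}{2\xi\sqrt\beta}$, $\varphi_L=\tau-\frac{1}{2\xi\sqrt\beta}$, and $$F_{\mathrm{MRC}}(\gamma)=\Big\{1-\exp\!\Big(-\frac{\gamma}{\bar\gamma_k}\Big)\sum_{n=0}^{N_R-1}\frac{1}{n!}\Big(\frac{\gamma}{\bar\gamma_k}\Big)^n\Big\}^{N_T}.$$ Then the quantity $\bar\varepsilon_k^{\mathrm{TAS/MRC}}:=\xi\sqrt\beta\int_{\varphi_L}^{\varphi_H}F_{\mathrm{MRC}}(\gamma)\,d\gamma$ equals $$1+\xi\sqrt\beta\sum_{m=1}^{N_T}\binom{N_T}{m}(-1)^m\sum_{j_1=0}^{N_R-1}\cdots\sum_{j_m=0}^{N_R-1}\Big(\prod_{t=1}^m\frac{1}{j_t!}\Big)m^{-\mathcal{S}-1}\bar\gamma_k\Big\{\Upsilon\Big(\mathcal{S}+1,\frac{m\varphi_H}{\bar\gamma_k}\Big)-\Upsilon\Big(\mathcal{S}+1,\frac{m\varphi_L}{\bar\gamma_k}\Big)\Big\},$$ where $\mathcal{S}=\sum_{t=1}^m j_t$ and $\Upsilon(\alpha,z)=\int_0^z e^{-t}t^{\alpha-1}\,dt$ is the lower incomplete gamma function.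
   Context: $F_{\mathrm{MRC}}$ is the CDF of the per-hop SNR $\max_{1\le i\le N_T}\sum_{j=1}^{N_R}\gamma^{(i,j)}$ of transmit antenna selection with maximum ratio combining, where $\gamma^{(i,j)}$ are i.i.d. exponential with mean $\bar\gamma_k$ (Rayleigh fading). The quantity $\bar\varepsilon_k^{\mathrm{TAS/MRC}}$ is the paper's approximation of the average block error rate at hop $k$ in the finite-blocklength regime with coding rate $\mathcal{R}$ and blocklength $\beta$. *)

theory Defs
  imports "HOL-Analysis.Analysis"
begin

text \<open>The integral is oriented
  (interval Lebesgue integral), so z may be negative.\<close>
definition lower_inc_gamma :: "nat \<Rightarrow> real \<Rightarrow> real" where
  "lower_inc_gamma a z = (LBINT t=0..z. exp (- t) * t ^ (a - 1))"

definition F_MRC :: "nat \<Rightarrow> nat \<Rightarrow> real \<Rightarrow> real \<Rightarrow> real" where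
  "F_MRC NT NR gbar g =
     (1 - exp (- g / gbar) * (\<Sum>n<NR. (1 / fact n) * (g / gbar) ^ n)) ^ NT"

definition xi_par :: "real \<Rightarrow> real" where
  "xi_par R = 1 / sqrt (2 * pi * (2 powr (2 * R) - 1))"

definition tau_par :: "real \<Rightarrow> real" where
  "tau_par R = 2 powr R - 1"

definition phi_H :: "real \<Rightarrow> real \<Rightarrow> real" where
  "phi_H R \<beta> = tau_par R + 1 / (2 * xi_par R * sqrt \<beta>)"

definition phi_L :: "real \<Rightarrow> real \<Rightarrow> real" where
  "phi_L R \<beta> = tau_par R - 1 / (2 * xi_par R * sqrt \<beta>)"

definition avg_BLER :: "nat \<Rightarrow> nat \<Rightarrow> real \<Rightarrow> real \<Rightarrow> real \<Rightarrow> real" where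
  "avg_BLER NT NR R \<beta> gbar =
     xi_par R * sqrt \<beta> * (LBINT g=phi_L R \<beta>..phi_H R \<beta>. F_MRC NT NR gbar g)"

end

theory Submission
  imports Defs
begin

text \<open>With \<open>x = g / gbar\<close> and \<open>E = exp (-x) * (\<Sum>n<NR. x^n / n!)\<close> we have \<open>F_MRC = (1 - E)^NT\<close>.
  The binomial theorem and the multinomial expansion of \<open>E^m\<close> turn this into a finite
  combination of the functions \<open>exp (-m x) * x^S\<close>, each of which has the antiderivative
  \<open>m powr (-S-1) * gbar * \<Upsilon>(S+1, m x)\<close> in \<open>g\<close>. The fundamental theorem of calculus then evaluates
  the integral, and the constant term contributes \<open>\<xi> \<surd>\<beta> (\<phi>\<^sub>H - \<phi>\<^sub>L) = 1\<close>.\<close>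

lemma power_sum_eq_sum_PiE:
  fixes f :: "nat \<Rightarrow> 'a::comm_semiring_1"
  assumes "finite A"
  shows "(\<Sum>n\<in>A. f n) ^ m = (\<Sum>j \<in> {..<m} \<rightarrow>\<^sub>E A. \<Prod>t<m. f (j t))"
proof -
  have "(\<Sum>n\<in>A. f n) ^ m = (\<Prod>t<m. \<Sum>n\<in>A. f n)"
    by simp
  also have "\<dots> = (\<Sum>j \<in> {..<m} \<rightarrow>\<^sub>E A. \<Prod>t<m. f (j t))"
    by (rule prod_sum_PiE) (use assms in auto)
  finally show ?thesis .
qed

lemma power_polynomial_eq_sum_PiE:
  fixes c :: "nat \<Rightarrow> 'a::comm_semiring_1"
  assumes "finite A"
  shows "(\<Sum>n\<in>A. c n * x ^ n) ^ m
       = (\<Sum>j \<in> {..<m} \<rightarrow>\<^sub>E A. (\<Prod>t<m. c (j t)) * x ^ sum j {..<m})"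
  by (simp only: power_sum_eq_sum_PiE[OF assms] prod.distrib power_sum)

lemma one_minus_power_binomial:
  fixes e :: "'a::comm_ring_1"
  shows "(1 - e) ^ n = 1 + (\<Sum>m=1..n. of_nat (n choose m) * (-1) ^ m * e ^ m)"
proof -
  have "(1 - e) ^ n = (\<Sum>m\<le>n. of_nat (n choose m) * (- e) ^ m * 1 ^ (n - m))"
    using binomial_ring[of "- e" 1 n] by (simp only: diff_conv_add_uminus add.commute)
  also have "\<dots> = (\<Sum>m\<le>n. of_nat (n choose m) * (-1) ^ m * e ^ m)"
    by (simp only: power_minus[of e] power_one mult_1_right mult.assoc)
  also have "\<dots> = 1 + (\<Sum>m=1..n. of_nat (n choose m) * (-1) ^ m * e ^ m)"
    by (simp add: sum.atMost_shift atLeast0AtMost[symmetric] sum.atLeast_Suc_atMost)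
  finally show ?thesis .
qed

lemma F_MRC_expand:
  "F_MRC NT NR gbar g = 1 + (\<Sum>m=1..NT. real (NT choose m) * (-1) ^ m *
     (\<Sum>j \<in> {..<m} \<rightarrow>\<^sub>E {..<NR}.
        (\<Prod>t<m. 1 / fact (j t)) * (exp (- (real m * g / gbar)) * (g / gbar) ^ sum j {..<m})))"
proof -
  have "(exp (- g / gbar) * (\<Sum>n<NR. (1 / fact n) * (g / gbar) ^ n)) ^ m
      = (\<Sum>j \<in> {..<m} \<rightarrow>\<^sub>E {..<NR}.
          (\<Prod>t<m. 1 / fact (j t)) * (exp (- (real m * g / gbar)) * (g / gbar) ^ sum j {..<m}))"
    for m
  proof -
    have "exp (- g / gbar) ^ m = exp (- (real m * g / gbar))"
      by (simp add: exp_of_nat_mult[symmetric])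
    then show ?thesis
      unfolding power_mult_distrib power_polynomial_eq_sum_PiE[OF finite_lessThan]
      by (simp only: sum_distrib_left mult.left_commute)
  qed
  then show ?thesis
    unfolding F_MRC_def one_minus_power_binomial by (simp only: mult.assoc)
qed

lemma has_real_derivative_lower_inc_gamma:
  "(lower_inc_gamma k has_real_derivative exp (- z) * z ^ (k - 1)) (at z)"
proof -
  define a where "a = min 0 z - 1"
  define b where "b = max 0 z + 1"
  have cont: "continuous_on {a..b} (\<lambda>t::real. exp (- t) * t ^ (k - 1))"
    by (intro continuous_intros)
  have "((\<lambda>u. LBINT t=(0::real)..u. exp (- t) * t ^ (k - 1))
      has_vector_derivative exp (- z) * z ^ (k - 1)) (at z within {a..b})"
    by (rule interval_integral_FTC2[OF _ _ cont]) (auto simp: a_def b_def)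
  moreover have "at z within {a..b} = at z"
    by (rule at_within_Icc_at) (auto simp: a_def b_def)
  ultimately show ?thesis
    unfolding lower_inc_gamma_def[abs_def] has_real_derivative_iff_has_vector_derivative
    by (simp add: zero_ereal_def)
qed

lemma has_real_derivative_scaled_lower_inc_gamma:
  fixes c b :: real
  assumes "c > 0" and "b > 0"
  shows "((\<lambda>g. c powr (- real S - 1) * b * lower_inc_gamma (S + 1) (c * g / b))
           has_real_derivative exp (- (c * g / b)) * (g / b) ^ S) (at g)"
proof -
  have lin: "((\<lambda>g. c * g / b) has_real_derivative c / b) (at g)"
    using \<open>b > 0\<close> by (auto intro!: derivative_eq_intros)
  have "((\<lambda>g. lower_inc_gamma (S + 1) (c * g / b))
      has_real_derivative exp (- (c * g / b)) * (c * g / b) ^ S * (c / b)) (at g)"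
    using DERIV_chain2[OF has_real_derivative_lower_inc_gamma[of "S + 1"] lin] by simp
  then have "((\<lambda>g. c powr (- real S - 1) * b * lower_inc_gamma (S + 1) (c * g / b))
      has_real_derivative
        c powr (- real S - 1) * b * (exp (- (c * g / b)) * (c * g / b) ^ S * (c / b))) (at g)"
    by (rule DERIV_cmult)
  moreover have "c powr (- real S - 1) * b * (exp (- (c * g / b)) * (c * g / b) ^ S * (c / b))
      = exp (- (c * g / b)) * (g / b) ^ S"
  proof -
    have "c powr (- real S - 1) * c ^ S * c = 1"
      using \<open>c > 0\<close> by (simp add: powr_diff powr_minus powr_realpow field_simps)
    moreover have "(c * g / b) ^ S = c ^ S * (g / b) ^ S"
      by (simp add: power_mult_distrib[symmetric])
    ultimately show ?thesis
      using \<open>b > 0\<close> by (simp add: field_simps)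
  qed
  ultimately show ?thesis
    by simp
qed

definition F_MRC_antideriv :: "nat \<Rightarrow> nat \<Rightarrow> real \<Rightarrow> real \<Rightarrow> real" where
  "F_MRC_antideriv NT NR gbar g = g + (\<Sum>m=1..NT. real (NT choose m) * (-1) ^ m *
     (\<Sum>j \<in> {..<m} \<rightarrow>\<^sub>E {..<NR}. (\<Prod>t<m. 1 / fact (j t)) *
        (real m powr (- real (sum j {..<m}) - 1) * gbar *
         lower_inc_gamma (sum j {..<m} + 1) (real m * g / gbar))))"

lemma has_real_derivative_F_MRC_antideriv:
  assumes "gbar > 0"
  shows "(F_MRC_antideriv NT NR gbar has_real_derivative F_MRC NT NR gbar g) (at g)"
proof -
  have "(F_MRC_antideriv NT NR gbar has_real_derivative
      1 + (\<Sum>m=1..NT. real (NT choose m) * (-1) ^ m *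
        (\<Sum>j \<in> {..<m} \<rightarrow>\<^sub>E {..<NR}. (\<Prod>t<m. 1 / fact (j t)) *
           (exp (- (real m * g / gbar)) * (g / gbar) ^ sum j {..<m})))) (at g)"
    unfolding F_MRC_antideriv_def[abs_def]
  proof (intro DERIV_add DERIV_ident DERIV_sum DERIV_cmult)
    fix m :: nat
    assume "m \<in> {1..NT}"
    then have "real m > 0"
      by simp
    then show "((\<lambda>g. real m powr (- real S - 1) * gbar * lower_inc_gamma (S + 1) (real m * g / gbar))
        has_real_derivative exp (- (real m * g / gbar)) * (g / gbar) ^ S) (at g)" for S
      using has_real_derivative_scaled_lower_inc_gamma assms by blast
  qed
  then show ?thesis
    by (simp only: F_MRC_expand)
qed

lemma integral_F_MRC:
  assumes "gbar > 0"
  shows "(LBINT g=a..b. F_MRC NT NR gbar g) = (b - a) + (\<Sum>m=1..NT. real (NT choose m) * (-1) ^ m *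
     (\<Sum>j \<in> {..<m} \<rightarrow>\<^sub>E {..<NR}.
        (\<Prod>t<m. 1 / fact (j t)) *
        real m powr (- real (sum j {..<m}) - 1) * gbar *
        (lower_inc_gamma (sum j {..<m} + 1) (real m * b / gbar)
         - lower_inc_gamma (sum j {..<m} + 1) (real m * a / gbar))))"
proof -
  have "continuous_on {min a b..max a b} (F_MRC NT NR gbar)"
    unfolding F_MRC_def[abs_def] using assms by (intro continuous_intros) auto
  then have "(LBINT g=a..b. F_MRC NT NR gbar g)
      = F_MRC_antideriv NT NR gbar b - F_MRC_antideriv NT NR gbar a"
    by (rule interval_integral_FTC_finite)
      (use has_real_derivative_F_MRC_antideriv[OF assms] in
        \<open>auto simp: has_real_derivative_iff_has_vector_derivative[symmetric]
          intro: has_field_derivative_at_within\<close>)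
  then show ?thesis
    unfolding F_MRC_antideriv_def right_diff_distrib sum_subtractf by (simp add: mult.assoc)
qed

lemma xi_par_pos:
  assumes "R > 0"
  shows "xi_par R > 0"
proof -
  have "2 powr (2 * R) > 1"
    using assms by simp
  then show ?thesis
    unfolding xi_par_def by simp
qed

lemma xi_par_sqrt_mult_phi_diff:
  assumes "R > 0" and "\<beta> > 0"
  shows "xi_par R * sqrt \<beta> * (phi_H R \<beta> - phi_L R \<beta>) = 1"
  using xi_par_pos[OF assms(1)] assms(2)
  unfolding phi_H_def phi_L_def by (simp add: field_simps)

theorem mainTheorem1:
  fixes NT NR :: nat and R \<beta> gbar :: real
  assumes "NT \<ge> 1" and "NR \<ge> 1" and "R > 0" and "\<beta> > 0" and "gbar > 0"
  shows "avg_BLER NT NR R \<beta> gbar =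
    1 + xi_par R * sqrt \<beta> *
      (\<Sum>m=1..NT. real (NT choose m) * (-1) ^ m *
        (\<Sum>j \<in> {..<m} \<rightarrow>\<^sub>E {..<NR}.
           (\<Prod>t<m. 1 / fact (j t)) *
           real m powr (- real (sum j {..<m}) - 1) * gbar *
           (lower_inc_gamma (sum j {..<m} + 1) (real m * phi_H R \<beta> / gbar)
            - lower_inc_gamma (sum j {..<m} + 1) (real m * phi_L R \<beta> / gbar))))"
  using xi_par_sqrt_mult_phi_diff[OF \<open>R > 0\<close> \<open>\<beta> > 0\<close>]
  unfolding avg_BLER_def integral_F_MRC[OF \<open>gbar > 0\<close>] distrib_left
  by simp

end
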